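(* Let $E_1,E_2,E_3,H_1,H_2,H_3$ be logically independent events with $H_i\ne\emptyset$. For every $(x_1,x_2,x_3)\in[0,1]^3$ the assessment $$\mathcal M=(x_1,x_2,x_3,\min\{x_1,x_2\},\min\{x_1,x_3\},\min\{x_2,x_3\},\min\{x_1,x_2,x_3\})$$ on $\mathcal F=\{\mathscr C_1,\mathscr C_2,\mathscr C_3,\mathscr C_{12},\mathscr C_{13},\mathscr C_{23},\mathscr C_{123}\}$ is coherent. Moreover, under this assessment, as random quantities $\mathscr C_{ij}=\min\{\mathscr C_i,\mathscr C_j\}$ for $i\ne j$ and $\mathscr C_{123}=\min\{\mathscr C_1,\mathscr C_2,\mathscr C_3\}$.
   Context: Events are identified with their indicators; $\bar E$ is the negation of $E$. For $H\ne\emptyset$ the conditional event $E|H$ is true if $EH$ is true, false if $\bar EH$ is true, void if $\bar H$ is true; with $P(E|H)=x$ it is identified with the random quantity $EH+x\bar H$, and a conditional random quantity $X|H$ with prevision $\mu$ with $XH+\mu\bar H$. Coherence (de Finetti): an assessment $(\mu_1,\dots,\mu_m)$ on $\{X_1|H_1,\dots,X_m|H_m\}$ is coherent iff for all real stakes $s_i$ the gain $G=\sum_is_iH_i(X_i-\mu_i)$, restricted to $H_1\vee\dots\vee H_m$, satisfies $\min G\le0\le\max G$. Logical independence: all conjunctions of the listed events or their negations are nonempty. Notation: $\mathscr C_i=E_i|H_i$, $\mathscr C_{ij}=(E_i|H_i)\wedge(E_j|H_j)$, $\mathscr C_{123}=(E_1|H_1)\wedge(E_2|H_2)\wedge(E_3|H_3)$,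 with previsions $x_i,x_{ij},x_{123}$ in the order of $\mathcal F$. Conjunction of two: $\mathscr C_{ij}$ equals $1$ if $E_iH_iE_jH_j$ true, $0$ if $\bar E_iH_i\vee\bar E_jH_j$ true, $x_i$ if $\bar H_iE_jH_j$ true, $x_j$ if $\bar H_jE_iH_i$ true, $x_{ij}$ if $\bar H_i\bar H_j$ true. $\mathscr C_{123}$ equals $1$ if $E_1H_1E_2H_2E_3H_3$ true; $0$ if $\bar E_1H_1\vee\bar E_2H_2\vee\bar E_3H_3$ true; $x_1$, $x_2$, $x_3$ if respectively $\bar H_1E_2H_2E_3H_3$, $\bar H_2E_1H_1E_3H_3$, $\bar H_3E_1H_1E_2H_2$ true; $x_{12}$, $x_{13}$, $x_{23}$ if respectively $\bar H_1\bar H_2E_3H_3$, $\bar H_1\bar H_3E_2H_2$, $\bar H_2\bar H_3E_1H_1$ true; $x_{123}$ if $\bar H_1\bar H_2\bar H_3$ true. *)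

theory Defs
  imports Complex_Main
begin

definition logically_independent :: "'w set list \<Rightarrow> bool" where
  "logically_independent As \<longleftrightarrow>
     (\<forall>bs::bool list. length bs = length As \<longrightarrow>
        \<Inter> (set (map2 (\<lambda>b A. if b then A else - A) bs As)) \<noteq> {})"

(* conditional event E|H with P(E|H)=x, identified with EH + x (not H) *)
definition cond_event :: "'w set \<Rightarrow> 'w set \<Rightarrow> real \<Rightarrow> 'w \<Rightarrow> real" where
  "cond_event E H x \<omega> = of_bool (\<omega> \<in> E \<and> \<omega> \<in> H) + x * of_bool (\<omega> \<notin> H)"

(* conjunction (E_i|H_i) /\ (E_j|H_j), given previsions x_i, x_j, x_ij *)
definition conj2 :: "'w set \<Rightarrow> 'w set \<Rightarrow> 'w set \<Rightarrow> 'w set \<Rightarrow> real \<Rightarrow> real \<Rightarrow> real \<Rightarrow> 'w \<Rightarrow> real" where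
  "conj2 Ei Hi Ej Hj xi xj xij \<omega> =
     (if \<omega> \<in> Ei \<and> \<omega> \<in> Hi \<and> \<omega> \<in> Ej \<and> \<omega> \<in> Hj then 1
      else if (\<omega> \<notin> Ei \<and> \<omega> \<in> Hi) \<or> (\<omega> \<notin> Ej \<and> \<omega> \<in> Hj) then 0
      else if \<omega> \<notin> Hi \<and> \<omega> \<in> Ej \<and> \<omega> \<in> Hj then xi
      else if \<omega> \<notin> Hj \<and> \<omega> \<in> Ei \<and> \<omega> \<in> Hi then xj
      else xij)"

(* conjunction (E_1|H_1) /\ (E_2|H_2) /\ (E_3|H_3), given previsions *)
definition conj3 :: "'w set \<Rightarrow> 'w set \<Rightarrow> 'w set \<Rightarrow> 'w set \<Rightarrow> 'w set \<Rightarrow> 'w set \<Rightarrow>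
    real \<Rightarrow> real \<Rightarrow> real \<Rightarrow> real \<Rightarrow> real \<Rightarrow> real \<Rightarrow> real \<Rightarrow> 'w \<Rightarrow> real" where
  "conj3 E1 H1 E2 H2 E3 H3 x1 x2 x3 x12 x13 x23 x123 \<omega> =
     (if \<omega> \<in> E1 \<and> \<omega> \<in> H1 \<and> \<omega> \<in> E2 \<and> \<omega> \<in> H2 \<and> \<omega> \<in> E3 \<and> \<omega> \<in> H3 then 1
      else if (\<omega> \<notin> E1 \<and> \<omega> \<in> H1) \<or> (\<omega> \<notin> E2 \<and> \<omega> \<in> H2) \<or> (\<omega> \<notin> E3 \<and> \<omega> \<in> H3) then 0
      else if \<omega> \<notin> H1 \<and> \<omega> \<in> E2 \<and> \<omega> \<in> H2 \<and> \<omega> \<in> E3 \<and> \<omega> \<in> H3 then x1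
      else if \<omega> \<notin> H2 \<and> \<omega> \<in> E1 \<and> \<omega> \<in> H1 \<and> \<omega> \<in> E3 \<and> \<omega> \<in> H3 then x2
      else if \<omega> \<notin> H3 \<and> \<omega> \<in> E1 \<and> \<omega> \<in> H1 \<and> \<omega> \<in> E2 \<and> \<omega> \<in> H2 then x3
      else if \<omega> \<notin> H1 \<and> \<omega> \<notin> H2 \<and> \<omega> \<in> E3 \<and> \<omega> \<in> H3 then x12
      else if \<omega> \<notin> H1 \<and> \<omega> \<notin> H3 \<and> \<omega> \<in> E2 \<and> \<omega> \<in> H2 then x13
      else if \<omega> \<notin> H2 \<and> \<omega> \<notin> H3 \<and> \<omega> \<in> E1 \<and> \<omega> \<in> H1 then x23
      else x123)"

(* de Finetti coherence of an assessment on a finite family X_k|H_k with previsions mu_k,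
   given as a list of triples (X_k, H_k, mu_k): for every choice of real stakes, the gain
   G = sum_k s_k H_k (X_k - mu_k), restricted to H_1 \/ ... \/ H_m, takes both a value
   <= 0 and a value >= 0 (i.e. min G <= 0 <= max G). *)
definition gain :: "(('w \<Rightarrow> real) \<times> 'w set \<times> real) list \<Rightarrow> (nat \<Rightarrow> real) \<Rightarrow> 'w \<Rightarrow> real" where
  "gain F s \<omega> = (\<Sum>k<length F. s k * of_bool (\<omega> \<in> fst (snd (F ! k))) *
                                 (fst (F ! k) \<omega> - snd (snd (F ! k))))"

definition coherent :: "(('w \<Rightarrow> real) \<times> 'w set \<times> real) list \<Rightarrow> bool" where
  "coherent F \<longleftrightarrow>
     (\<forall>s::nat \<Rightarrow> real.
        let U = (\<Union>k<length F. fst (snd (F ! k))) in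
        (\<exists>\<omega>\<in>U. gain F s \<omega> \<le> 0) \<and> (\<exists>\<omega>\<in>U. gain F s \<omega> \<ge> 0))"

end

theory Submission
  imports Defs
begin

text \<open>On a constituent where H1, H2, H3 are all true, the gain of the family reduces to the
  gain of the unconditional assessment x1, x2, x3 on E1, E2, E3 with minima on their conjunctions.
  That assessment is an expectation, namely under the comonotone coupling: for t uniform in [0,1)
  let Ei be true iff t < xi, so that each conjunction has probability the minimum of its xi.
  The expected gain is therefore zero, so the gain is nonpositive on some outcome and nonnegative
  on another, and logical independence realises both outcomes inside H1, H2, H3.\<close>

lemma weighted_sum_zero_imp_signs:
  fixes w g :: "'a \<Rightarrow> real"
  assumes "finite A" "\<And>a. a \<in> A \<Longrightarrow> w a \<ge> 0" "sum w A \<noteq> 0" "(\<Sum>a\<in>A. w a * g a) = 0"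
  shows "\<exists>a\<in>A. g a \<le> 0" and "\<exists>a\<in>A. g a \<ge> 0"
proof -
  have nonpos: "\<exists>a\<in>A. f a \<le> 0" if "(\<Sum>a\<in>A. w a * f a) = 0" for f :: "'a \<Rightarrow> real"
  proof (rule ccontr)
    assume "\<not> (\<exists>a\<in>A. f a \<le> 0)"
    then have pos: "f a > 0" if "a \<in> A" for a
      using that by auto
    then have "w a * f a = 0" if "a \<in> A" for a
      using that \<open>(\<Sum>a\<in>A. w a * f a) = 0\<close> assms(1,2)
      by (subst (asm) sum_nonneg_eq_0_iff) (auto intro: mult_nonneg_nonneg less_imp_le)
    then have "w a = 0" if "a \<in> A" for a
      using that pos by fastforce
    then show False
      using assms(3) by simp
  qed
  show "\<exists>a\<in>A. g a \<le> 0"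
    using nonpos assms(4) by blast
  show "\<exists>a\<in>A. g a \<ge> 0"
    using nonpos[of "\<lambda>a. - g a"] assms(4) by (auto simp: sum_negf)
qed

text \<open>The weight of an outcome is the length of the set of thresholds t in [0,1) with
  t < xi exactly for the events Ei declared true.\<close>

definition comonotone_weight :: "real \<Rightarrow> real \<Rightarrow> real \<Rightarrow> bool \<times> bool \<times> bool \<Rightarrow> real" where
  "comonotone_weight x1 x2 x3 = (\<lambda>(e1, e2, e3).
     max 0 (min (if e1 then x1 else 1) (min (if e2 then x2 else 1) (if e3 then x3 else 1))
          - max (if e1 then 0 else x1) (max (if e2 then 0 else x2) (if e3 then 0 else x3))))"

definition conj_outcomes :: "bool \<times> bool \<times> bool \<Rightarrow> bool list" where
  "conj_outcomes = (\<lambda>(e1, e2, e3). [e1, e2, e3, e1 \<and> e2, e1 \<and> e3, e2 \<and> e3, e1 \<and> e2 \<and> e3])"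

definition min_assessment :: "real \<Rightarrow> real \<Rightarrow> real \<Rightarrow> real list" where
  "min_assessment x1 x2 x3 = [x1, x2, x3, min x1 x2, min x1 x3, min x2 x3, min x1 (min x2 x3)]"

definition outcome_gain :: "(nat \<Rightarrow> real) \<Rightarrow> real \<Rightarrow> real \<Rightarrow> real \<Rightarrow> bool \<times> bool \<times> bool \<Rightarrow> real" where
  "outcome_gain s x1 x2 x3 e =
     (\<Sum>k<7. s k * (of_bool (conj_outcomes e ! k) - min_assessment x1 x2 x3 ! k))"

lemma sum_UNIV_bool3:
  fixes f :: "bool \<times> bool \<times> bool \<Rightarrow> 'a::comm_monoid_add"
  shows "(\<Sum>e\<in>UNIV. f e) =
    f (True, True, True) + f (True, True, False) + f (True, False, True) + f (True, False, False)
    + f (False, True, True) + f (False, True, False) + f (False, False, True)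
    + f (False, False, False)"
  by (simp add: UNIV_Times_UNIV[symmetric] sum.cartesian_product UNIV_bool add_ac
           del: UNIV_Times_UNIV)

lemma comonotone_weight_nonneg: "comonotone_weight x1 x2 x3 e \<ge> 0"
  by (auto simp: comonotone_weight_def split: prod.split)

lemma sum_comonotone_weight:
  assumes "x1 \<in> {0..1}" "x2 \<in> {0..1}" "x3 \<in> {0..1}"
  shows "(\<Sum>e\<in>UNIV. comonotone_weight x1 x2 x3 e) = 1"
  using assms unfolding sum_UNIV_bool3 by (auto simp: comonotone_weight_def min_def max_def)

lemma comonotone_conj_expectation:
  assumes "x1 \<in> {0..1}" "x2 \<in> {0..1}" "x3 \<in> {0..1}" "k < 7"
  shows "(\<Sum>e\<in>UNIV. comonotone_weight x1 x2 x3 e * of_bool (conj_outcomes e ! k))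
         = min_assessment x1 x2 x3 ! k"
proof -
  have "k = 0 \<or> k = 1 \<or> k = 2 \<or> k = 3 \<or> k = 4 \<or> k = 5 \<or> k = 6"
    using \<open>k < 7\<close> by linarith
  then show ?thesis
    using assms(1-3) unfolding sum_UNIV_bool3
    by (elim disjE)
       (auto simp: comonotone_weight_def conj_outcomes_def min_assessment_def min_def max_def)
qed

lemma comonotone_expected_outcome_gain:
  assumes "x1 \<in> {0..1}" "x2 \<in> {0..1}" "x3 \<in> {0..1}"
  shows "(\<Sum>e\<in>UNIV. comonotone_weight x1 x2 x3 e * outcome_gain s x1 x2 x3 e) = 0"
proof -
  let ?w = "comonotone_weight x1 x2 x3" and ?\<mu> = "min_assessment x1 x2 x3"
  have "(\<Sum>e\<in>UNIV. ?w e * outcome_gain s x1 x2 x3 e)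
        = (\<Sum>k<7. \<Sum>e\<in>UNIV. ?w e * (s k * (of_bool (conj_outcomes e ! k) - ?\<mu> ! k)))"
    unfolding outcome_gain_def sum_distrib_left by (rule sum.swap)
  also have "\<dots> = (\<Sum>k<7. s k * ((\<Sum>e\<in>UNIV. ?w e * of_bool (conj_outcomes e ! k))
                                   - ?\<mu> ! k * (\<Sum>e\<in>UNIV. ?w e)))"
  proof (rule sum.cong[OF refl])
    fix k
    have "?w e * (s k * (of_bool (conj_outcomes e ! k) - ?\<mu> ! k))
          = s k * (?w e * of_bool (conj_outcomes e ! k) - ?\<mu> ! k * ?w e)" for e
      by (simp add: algebra_simps)
    then show "(\<Sum>e\<in>UNIV. ?w e * (s k * (of_bool (conj_outcomes e ! k) - ?\<mu> ! k)))
        = s k * ((\<Sum>e\<in>UNIV. ?w e * of_bool (conj_outcomes e ! k)) - ?\<mu> ! k * (\<Sum>e\<in>UNIV. ?w e))"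
      by (simp only: sum_distrib_left[symmetric] sum_subtractf)
  qed
  also have "\<dots> = 0"
    by (intro sum.neutral ballI)
       (simp only: lessThan_iff comonotone_conj_expectation[OF assms] sum_comonotone_weight[OF assms]
                   mult_1_right diff_self mult_zero_right)
  finally show ?thesis .
qed

lemma outcome_gain_signs:
  assumes "x1 \<in> {0..1}" "x2 \<in> {0..1}" "x3 \<in> {0..1}"
  shows "\<exists>e. outcome_gain s x1 x2 x3 e \<le> 0" and "\<exists>e. outcome_gain s x1 x2 x3 e \<ge> 0"
  using weighted_sum_zero_imp_signs[OF finite_UNIV, of "comonotone_weight x1 x2 x3"]
        comonotone_weight_nonneg sum_comonotone_weight[OF assms]
        comonotone_expected_outcome_gain[OF assms]
  by auto

lemma logically_independent_constituent:
  assumes "logically_independent [E1, E2, E3, H1, H2, H3]"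
  obtains \<omega> where "\<omega> \<in> H1" "\<omega> \<in> H2" "\<omega> \<in> H3"
    "\<omega> \<in> E1 \<longleftrightarrow> e1" "\<omega> \<in> E2 \<longleftrightarrow> e2" "\<omega> \<in> E3 \<longleftrightarrow> e3"
proof -
  have "(if e1 then E1 else - E1) \<inter> (if e2 then E2 else - E2) \<inter> (if e3 then E3 else - E3)
          \<inter> H1 \<inter> H2 \<inter> H3 \<noteq> {}"
    using assms unfolding logically_independent_def
    by (drule_tac x="[e1, e2, e3, True, True, True]" in spec) (simp add: Int_assoc)
  then show ?thesis
    using that by (auto split: if_splits)
qed

lemma conj2_eq_min:
  assumes "xi \<in> {0..1}" "xj \<in> {0..1}"
  shows "conj2 Ei Hi Ej Hj xi xj (min xi xj) \<omega>
         = min (cond_event Ei Hi xi \<omega>) (cond_event Ej Hj xj \<omega>)"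
  using assms unfolding conj2_def cond_event_def by (auto simp: min_def)

lemma conj3_eq_min:
  assumes "x1 \<in> {0..1}" "x2 \<in> {0..1}" "x3 \<in> {0..1}"
  shows "conj3 E1 H1 E2 H2 E3 H3 x1 x2 x3 (min x1 x2) (min x1 x3) (min x2 x3) (min x1 (min x2 x3)) \<omega>
         = min (cond_event E1 H1 x1 \<omega>) (min (cond_event E2 H2 x2 \<omega>) (cond_event E3 H3 x3 \<omega>))"
  using assms unfolding conj3_def cond_event_def
  by (cases "\<omega> \<in> H1"; cases "\<omega> \<in> H2"; cases "\<omega> \<in> H3";
      cases "\<omega> \<in> E1"; cases "\<omega> \<in> E2"; cases "\<omega> \<in> E3") (simp_all add: min_def)

theorem theorem22:
  fixes E1 E2 E3 H1 H2 H3 :: "'w set" and x1 x2 x3 :: real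
  assumes indep: "logically_independent [E1, E2, E3, H1, H2, H3]"
    and H_ne: "H1 \<noteq> {}" "H2 \<noteq> {}" "H3 \<noteq> {}"
    and x_range: "x1 \<in> {0..1}" "x2 \<in> {0..1}" "x3 \<in> {0..1}"
  shows
    "let x12 = min x1 x2; x13 = min x1 x3; x23 = min x2 x3; x123 = min x1 (min x2 x3);
         C1 = cond_event E1 H1 x1; C2 = cond_event E2 H2 x2; C3 = cond_event E3 H3 x3;
         C12 = conj2 E1 H1 E2 H2 x1 x2 x12;
         C13 = conj2 E1 H1 E3 H3 x1 x3 x13;
         C23 = conj2 E2 H2 E3 H3 x2 x3 x23;
         C123 = conj3 E1 H1 E2 H2 E3 H3 x1 x2 x3 x12 x13 x23 x123
     in coherent [(C1, H1, x1), (C2, H2, x2), (C3, H3, x3),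
                  (C12, H1 \<union> H2, x12), (C13, H1 \<union> H3, x13), (C23, H2 \<union> H3, x23),
                  (C123, H1 \<union> H2 \<union> H3, x123)]
        \<and> (\<forall>\<omega>. C12 \<omega> = min (C1 \<omega>) (C2 \<omega>))
        \<and> (\<forall>\<omega>. C13 \<omega> = min (C1 \<omega>) (C3 \<omega>))
        \<and> (\<forall>\<omega>. C23 \<omega> = min (C2 \<omega>) (C3 \<omega>))
        \<and> (\<forall>\<omega>. C123 \<omega> = min (C1 \<omega>) (min (C2 \<omega>) (C3 \<omega>)))"
  unfolding Let_def
proof (intro conjI allI conj2_eq_min conj3_eq_min x_range)
  let ?F = "[(cond_event E1 H1 x1, H1, x1), (cond_event E2 H2 x2, H2, x2),
    (cond_event E3 H3 x3, H3, x3),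
    (conj2 E1 H1 E2 H2 x1 x2 (min x1 x2), H1 \<union> H2, min x1 x2),
    (conj2 E1 H1 E3 H3 x1 x3 (min x1 x3), H1 \<union> H3, min x1 x3),
    (conj2 E2 H2 E3 H3 x2 x3 (min x2 x3), H2 \<union> H3, min x2 x3),
    (conj3 E1 H1 E2 H2 E3 H3 x1 x2 x3 (min x1 x2) (min x1 x3) (min x2 x3) (min x1 (min x2 x3)),
     H1 \<union> H2 \<union> H3, min x1 (min x2 x3))]"
  have gain_on_constituent:
    "\<exists>\<omega>\<in>\<Union>k<length ?F. fst (snd (?F ! k)). gain ?F s \<omega> = outcome_gain s x1 x2 x3 e" for s e
  proof (cases e)
    case (fields e1 e2 e3)
    obtain \<omega> where "\<omega> \<in> H1" "\<omega> \<in> H2" "\<omega> \<in> H3"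
      "\<omega> \<in> E1 \<longleftrightarrow> e1" "\<omega> \<in> E2 \<longleftrightarrow> e2" "\<omega> \<in> E3 \<longleftrightarrow> e3"
      using logically_independent_constituent[OF indep] .
    then show ?thesis
      unfolding fields
      by (intro bexI[of _ \<omega>])
         (auto simp: gain_def outcome_gain_def conj_outcomes_def min_assessment_def cond_event_def
                     conj2_def conj3_def lessThan_Suc eval_nat_numeral)
  qed
  show "coherent ?F"
    unfolding coherent_def Let_def
    using gain_on_constituent outcome_gain_signs[OF x_range] by metis
qed

end
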